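(* For integers $s,t\ge0$ let $m_{i,j}^{s,t}=\int_{(0,1)^2}\frac{x^{s+i}y^{s+j}}{x+y}\left(\frac{1-x}{1+x}\right)^t\left(\frac{1-y}{1+y}\right)^tdx\,dy$, $\tau_n^{s,t}=\det(m_{i,j}^{s,t})_{i,j=0}^{n-1}$, $\xi_n^{s,t}=\det(m_{i,j+1}^{s,t})_{i,j=0}^{n-1}$ (with $\tau_0^{s,t}=\xi_0^{s,t}=1$), $$P_n^{s,t}(x)=\frac{1}{\tau_n^{s,t}}\det\begin{pmatrix} m_{0,0}^{s,t}&\cdots&m_{0,n-1}^{s,t}&1\\ \vdots&&\vdots&\vdots\\ m_{n,0}^{s,t}&\cdots&m_{n,n-1}^{s,t}&x^n\end{pmatrix},\qquad Q_n^{s,t}(x)=\frac{1}{\xi_n^{s,t}}\det\begin{pmatrix} m_{0,1}^{s,t}&\cdots&m_{0,n}^{s,t}&1\\ \vdots&&\vdots&\vdots\\ m_{n,1}^{s,t}&\cdots&m_{n,n}^{s,t}&x^n\end{pmatrix}.$$ Then for all $n\ge0$ and $s,t\ge0$, $$P_n^{s+1,t}(x)=\frac1x\left(P_{n+1}^{s,t}(x)+\frac{\xi_n^{s,t}\xi_{n+1}^{s,t}}{\tau_n^{s+1,t}\tau_{n+1}^{s,t}}Q_n^{s,t}(x)\right).$$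
   Context: $m_{i,j}^{s,t}=\langle x^i,y^j\rangle_{s,t}$ for the bilinear form $\langle f,g\rangle_{s,t}=\int_{(0,1)^2}\frac{x^sy^s}{x+y}f(x)g(y)\left(\frac{1-x}{1+x}\right)^t\left(\frac{1-y}{1+y}\right)^tdx\,dy$. The determinants $\tau_n^{s,t},\xi_n^{s,t}$ are positive. $P_n^{s,t}$ are the monic Cauchy–Jacobi bi-orthogonal polynomials and $Q_n^{s,t}$ the monic "adjacent" polynomials (determined by $\langle Q_n^{s,t}(x),y^i\rangle_{s,t}=0$ for $1\le i\le n$). *)

theory Defs
  imports "HOL-Analysis.Analysis" "Jordan_Normal_Form.Determinant"
begin

definition mom :: "nat \<Rightarrow> nat \<Rightarrow> nat \<Rightarrow> nat \<Rightarrow> real" where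
  "mom s t i j = (LINT p : {0<..<1} \<times> {0<..<1} | lborel.
      (fst p ^ (s + i) * snd p ^ (s + j) / (fst p + snd p))
      * ((1 - fst p) / (1 + fst p)) ^ t * ((1 - snd p) / (1 + snd p)) ^ t)"

definition tau :: "nat \<Rightarrow> nat \<Rightarrow> nat \<Rightarrow> real" where
  "tau s t n = Determinant.det (Matrix.mat n n (\<lambda>(i, j). mom s t i j))"

definition xi :: "nat \<Rightarrow> nat \<Rightarrow> nat \<Rightarrow> real" where
  "xi s t n = Determinant.det (Matrix.mat n n (\<lambda>(i, j). mom s t i (j + 1)))"

definition Pcj :: "nat \<Rightarrow> nat \<Rightarrow> nat \<Rightarrow> real \<Rightarrow> real" where
  "Pcj s t n x = Determinant.det (Matrix.mat (n + 1) (n + 1)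
      (\<lambda>(i, j). if j < n then mom s t i j else x ^ i)) / tau s t n"

definition Qcj :: "nat \<Rightarrow> nat \<Rightarrow> nat \<Rightarrow> real \<Rightarrow> real" where
  "Qcj s t n x = Determinant.det (Matrix.mat (n + 1) (n + 1)
      (\<lambda>(i, j). if j < n then mom s t i (j + 1) else x ^ i)) / xi s t n"

end

theory Submission
  imports Defs "HOL-Computational_Algebra.Polynomial"
begin

(* The moment matrices (m_{i,j+e}), e = 0, 1, are nonsingular for every weight that is continuous
   on [0,1] and positive on (0,1).  A null vector gives a nonzero polynomial g of degree < N such that
   Phi(x) = int_0^1 y^e g(y) w(y) / (x + y) dy is orthogonal to x^i w(x) for all i < N.  A Descartes-type
   argument (Rolle's theorem applied to (x + z)^j times the generalised Stieltjes transform of order j)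
   shows that Phi has at most as many zeros in (0,1) as g, hence fewer than N; multiplying Phi by the
   polynomial vanishing at its sign changes yields a one-signed, almost everywhere nonzero integrand
   with vanishing integral.
   Given nonsingularity the identity is linear algebra.  Up to the factors tau, the polynomials
   x P_n^{s+1} and P_{n+1}^{s} have the same leading term, so their difference has degree at most n and
   satisfies the orthogonality conditions that determine Q_n^{s,t} up to a scalar; comparing constant
   terms identifies the scalar as xi_n xi_{n+1}. *)

section \<open>The Cauchy pairing and Stieltjes transforms\<close>

definition cauchy_pairing :: "(real \<Rightarrow> real) \<Rightarrow> (real \<Rightarrow> real) \<Rightarrow> real" where
  "cauchy_pairing f g = set_lebesgue_integral (lborel \<Otimes>\<^sub>M lborel) ({0<..<1} \<times> {0<..<1})
     (\<lambda>(x, y). f x * g y / (x + y))"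

definition stieltjes :: "nat \<Rightarrow> (real \<Rightarrow> real) \<Rightarrow> real \<Rightarrow> real" where
  "stieltjes j f x = integral {0..1} (\<lambda>y. f y / (x + y) ^ j)"

lemma continuous_on_bounded_Icc:
  fixes f :: "real \<Rightarrow> real"
  assumes "continuous_on {a..b} f"
  obtains C where "\<And>x. x \<in> {a..b} \<Longrightarrow> \<bar>f x\<bar> \<le> C"
  using compact_imp_bounded[OF compact_continuous_image[OF assms compact_Icc]]
  unfolding bounded_real by (meson imageI that)

lemma inverse_add_le_inverse_sqrt_mult:
  fixes x y :: real
  assumes "0 < x" "0 < y"
  shows "1 / (x + y) \<le> 1 / sqrt x * (1 / sqrt y)"
proof -
  have "x * y \<le> (x + y)\<^sup>2"
    using assms by (simp add: power2_eq_square algebra_simps)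
  then have "sqrt (x * y) \<le> x + y"
    using assms by (intro real_le_lsqrt) auto
  then show ?thesis
    using assms by (simp add: real_sqrt_mult divide_simps)
qed

lemma set_integrable_inverse_sqrt: "set_integrable lborel {0<..<1::real} (\<lambda>x. 1 / sqrt x)"
proof -
  have "(\<lambda>x::real. x powr (-1/2)) integrable_on {0<..1}"
    by (rule integrable_on_powr_from_0') auto
  then have "(\<lambda>x::real. 1 / sqrt x) integrable_on {0<..1}"
    by (rule Henstock_Kurzweil_Integration.integrable_cong[THEN iffD1, rotated])
      (auto simp: powr_minus_divide powr_half_sqrt)
  then have "(\<lambda>x::real. 1 / sqrt x) absolutely_integrable_on {0<..1}"
    by (rule nonnegative_absolutely_integrable_1) auto
  then have "set_integrable lborel {0<..1::real} (\<lambda>x. 1 / sqrt x)"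
    unfolding set_integrable_def by (subst (asm) integrable_completion) auto
  then show ?thesis
    by (rule set_integrable_subset) auto
qed

lemma integrable_pair_lborel_mult:
  fixes f g :: "real \<Rightarrow> real"
  assumes f: "integrable lborel f" and g: "integrable lborel g"
  shows "integrable (lborel \<Otimes>\<^sub>M lborel) (\<lambda>z. f (fst z) * g (snd z))"
proof -
  have [measurable]: "f \<in> borel_measurable lborel" "g \<in> borel_measurable lborel"
    using f g by auto
  have "(\<integral>\<^sup>+z. ennreal (norm (f (fst z) * g (snd z))) \<partial>(lborel \<Otimes>\<^sub>M lborel))
      = (\<integral>\<^sup>+x. \<integral>\<^sup>+y. ennreal (norm (f x)) * ennreal (norm (g y)) \<partial>lborel \<partial>lborel)"
    by (subst lborel.nn_integral_fst[symmetric])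
      (auto simp: abs_mult ennreal_mult intro!: nn_integral_cong)
  also have "\<dots> = (\<integral>\<^sup>+x. ennreal (norm (f x)) \<partial>lborel) * (\<integral>\<^sup>+y. ennreal (norm (g y)) \<partial>lborel)"
    by (simp add: nn_integral_cmult nn_integral_multc)
  also have "\<dots> < \<infinity>"
    using f g by (simp add: integrable_iff_bounded ennreal_mult_less_top)
  finally show ?thesis
    by (simp add: integrable_iff_bounded)
qed

lemma set_integrable_cauchy_kernel:
  fixes f g :: "real \<Rightarrow> real"
  assumes f: "continuous_on {0..1} f" and g: "continuous_on {0..1} g"
  shows "set_integrable (lborel \<Otimes>\<^sub>M lborel) ({0<..<1} \<times> {0<..<1}) (\<lambda>(x, y). f x * g y / (x + y))"
proof -
  obtain C where C: "\<And>x. x \<in> {0..1} \<Longrightarrow> \<bar>f x\<bar> \<le> C"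
    using continuous_on_bounded_Icc[OF f] by blast
  obtain D where D: "\<And>y. y \<in> {0..1} \<Longrightarrow> \<bar>g y\<bar> \<le> D"
    using continuous_on_bounded_Icc[OF g] by blast
  have CD: "0 \<le> C" "0 \<le> D"
    using C[of 0] D[of 0] by auto
  define F where "F x = indicator {0<..<1::real} x * (1 / sqrt x)" for x
  have "integrable lborel F"
    using set_integrable_inverse_sqrt unfolding set_integrable_def F_def by simp
  then have bound: "integrable (lborel \<Otimes>\<^sub>M lborel) (\<lambda>z. C * D * (F (fst z) * F (snd z)))"
    by (intro integrable_mult_right integrable_pair_lborel_mult)
  have cont: "continuous_on ({0<..<1} \<times> {0<..<1}) (\<lambda>(x, y). f x * g y / (x + y))"
    unfolding case_prod_unfold
    by (intro continuous_intros continuous_on_compose2[OF f] continuous_on_compose2[OF g]) auto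
  have meas: "(\<lambda>z. indicator ({0<..<1} \<times> {0<..<1}) z *\<^sub>R (\<lambda>(x, y). f x * g y / (x + y)) z)
      \<in> borel_measurable (lborel \<Otimes>\<^sub>M lborel)"
    unfolding lborel_prod measurable_lborel2
    by (rule borel_measurable_continuous_on_indicator[OF _ cont])
      (intro borel_open open_Times open_greaterThanLessThan)
  show ?thesis
    unfolding set_integrable_def
  proof (rule Bochner_Integration.integrable_bound[OF bound meas AE_I2])
    fix z :: "real \<times> real"
    obtain x y where z: "z = (x, y)" by fastforce
    show "norm (indicator ({0<..<1} \<times> {0<..<1}) z *\<^sub>R (\<lambda>(x, y). f x * g y / (x + y)) z)
        \<le> norm (C * D * (F (fst z) * F (snd z)))"
    proof (cases "x \<in> {0<..<1} \<and> y \<in> {0<..<1}")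
      case True
      then have xy: "0 < x" "0 < y" "x < 1" "y < 1" by auto
      have "1 / (x + y) \<le> 1 / sqrt x * (1 / sqrt y)"
        using xy by (intro inverse_add_le_inverse_sqrt_mult)
      moreover have "\<bar>f x * g y\<bar> \<le> C * D"
        unfolding abs_mult using C[of x] D[of y] xy by (intro mult_mono) auto
      ultimately have "\<bar>f x * g y\<bar> * (1 / (x + y)) \<le> C * D * (1 / sqrt x * (1 / sqrt y))"
        using xy by (intro mult_mono') auto
      then show ?thesis
        using True xy z CD by (simp add: F_def abs_mult)
    qed (auto simp: z F_def)
  qed
qed

lemma continuous_on_stieltjes_integrand:
  fixes f :: "real \<Rightarrow> real"
  assumes f: "continuous_on {0..1} f" and x: "0 < x"
  shows "continuous_on {0..1} (\<lambda>y. f y / (x + y) ^ j)"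
  using x by (intro continuous_intros f) auto

lemma stieltjes_eq_set_integral:
  fixes f :: "real \<Rightarrow> real"
  assumes f: "continuous_on {0..1} f" and x: "0 < x"
  shows "stieltjes j f x = (LINT y:{0<..<1}|lborel. f y / (x + y) ^ j)"
proof -
  have "set_integrable lborel {0<..<1} (\<lambda>y. f y / (x + y) ^ j)"
    by (rule set_integrable_subset[OF borel_integrable_atLeastAtMost'
          [OF continuous_on_stieltjes_integrand[OF f x]]]) auto
  then have "(LINT y:{0<..<1}|lborel. f y / (x + y) ^ j) = integral {0<..<1} (\<lambda>y. f y / (x + y) ^ j)"
    by (rule set_borel_integral_eq_integral(2))
  then show ?thesis
    unfolding stieltjes_def by (simp add: integral_open_interval_real)
qed

lemma cauchy_pairing_eq_integral_stieltjes:
  fixes f g :: "real \<Rightarrow> real"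
  assumes f: "continuous_on {0..1} f" and g: "continuous_on {0..1} g"
  shows "set_integrable lborel {0<..<1} (\<lambda>x. f x * stieltjes 1 g x)"
    and "cauchy_pairing f g = (LINT x:{0<..<1}|lborel. f x * stieltjes 1 g x)"
proof -
  define H where "H = (\<lambda>z. indicator ({0<..<1} \<times> {0<..<1}) z *\<^sub>R (\<lambda>(x, y). f x * g y / (x + y)) z)"
  have H: "integrable (lborel \<Otimes>\<^sub>M lborel) H"
    using set_integrable_cauchy_kernel[OF f g] unfolding set_integrable_def H_def .
  have inner: "(LBINT y. H (x, y)) = indicator {0<..<1} x * (f x * stieltjes 1 g x)" for x
  proof (cases "x \<in> {0<..<1}")
    case True
    then have "H (x, y) = f x * (indicator {0<..<1} y * (g y / (x + y)))" for y
      by (simp add: H_def indicator_def)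
    then have "(LBINT y. H (x, y)) = f x * (LBINT y. indicator {0<..<1} y * (g y / (x + y)))"
      by (simp only: integral_mult_right_zero)
    then have "(LBINT y. H (x, y)) = f x * (LINT y:{0<..<1}|lborel. g y / (x + y))"
      unfolding set_lebesgue_integral_def real_scaleR_def .
    then show ?thesis
      using True stieltjes_eq_set_integral[OF g, of x 1] by simp
  next
    case False
    then have "H (x, y) = 0" for y
      by (auto simp: H_def indicator_def)
    then show ?thesis
      using False by simp
  qed
  have "integrable lborel (\<lambda>x. LBINT y. H (x, y))"
    by (rule lborel_pair.integrable_fst'[OF H])
  then show "set_integrable lborel {0<..<1} (\<lambda>x. f x * stieltjes 1 g x)"
    unfolding inner set_integrable_def by simp
  have "cauchy_pairing f g = integral\<^sup>L (lborel \<Otimes>\<^sub>M lborel) H"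
    unfolding cauchy_pairing_def set_lebesgue_integral_def H_def ..
  also have "\<dots> = (LBINT x. LBINT y. H (x, y))"
    by (rule lborel_pair.integral_fst'[OF H, symmetric])
  finally show "cauchy_pairing f g = (LINT x:{0<..<1}|lborel. f x * stieltjes 1 g x)"
    unfolding inner set_lebesgue_integral_def by simp
qed

lemma cauchy_pairing_sum_right:
  fixes f :: "real \<Rightarrow> real" and g :: "'a \<Rightarrow> real \<Rightarrow> real"
  assumes f: "continuous_on {0..1} f" and g: "\<And>j. j \<in> J \<Longrightarrow> continuous_on {0..1} (g j)"
  shows "cauchy_pairing f (\<lambda>y. \<Sum>j\<in>J. c j * g j y) = (\<Sum>j\<in>J. c j * cauchy_pairing f (g j))"
proof -
  let ?S = "{0<..<1::real} \<times> {0<..<1::real}"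
  let ?K = "\<lambda>j z. indicator ?S z *\<^sub>R (\<lambda>(x, y). f x * g j y / (x + y)) z"
  have "cauchy_pairing f (\<lambda>y. \<Sum>j\<in>J. c j * g j y)
      = (\<integral>z. (\<Sum>j\<in>J. c j * ?K j z) \<partial>(lborel \<Otimes>\<^sub>M lborel))"
    unfolding cauchy_pairing_def set_lebesgue_integral_def
    by (intro Bochner_Integration.integral_cong)
      (auto simp: sum_distrib_left sum_divide_distrib mult_ac split: prod.splits)
  also have "\<dots> = (\<Sum>j\<in>J. c j * cauchy_pairing f (g j))"
    unfolding cauchy_pairing_def set_lebesgue_integral_def
    using set_integrable_cauchy_kernel[OF f g] unfolding set_integrable_def
    by (subst Bochner_Integration.integral_sum) auto
  finally show ?thesis .
qed

lemma cauchy_pairing_commute: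
  fixes f g :: "real \<Rightarrow> real"
  assumes f: "continuous_on {0..1} f" and g: "continuous_on {0..1} g"
  shows "cauchy_pairing f g = cauchy_pairing g f"
proof -
  let ?H = "\<lambda>z. indicator ({0<..<1} \<times> {0<..<1}) z *\<^sub>R (\<lambda>(x, y). g x * f y / (x + y)) z"
  have "?H \<in> borel_measurable (lborel \<Otimes>\<^sub>M lborel)"
    using set_integrable_cauchy_kernel[OF g f] unfolding set_integrable_def
    by (rule borel_measurable_integrable)
  then have "(\<integral>(x, y). ?H (y, x) \<partial>(lborel \<Otimes>\<^sub>M lborel)) = integral\<^sup>L (lborel \<Otimes>\<^sub>M lborel) ?H"
    by (rule lborel_pair.integral_product_swap)
  moreover have "(\<lambda>(x, y). ?H (y, x))
      = (\<lambda>z. indicator ({0<..<1} \<times> {0<..<1}) z *\<^sub>R (\<lambda>(x, y). f x * g y / (x + y)) z)"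
    by (auto simp: indicator_def add.commute mult.commute fun_eq_iff)
  ultimately show ?thesis
    unfolding cauchy_pairing_def set_lebesgue_integral_def by simp
qed

lemma has_real_derivative_stieltjes:
  fixes f :: "real \<Rightarrow> real"
  assumes f: "continuous_on {0..1} f" and x: "0 < x"
  shows "(stieltjes j f has_real_derivative - (real j * stieltjes (Suc j) f x)) (at x)"
proof -
  have "((\<lambda>x. integral (cbox 0 1) (\<lambda>y. f y / (x + y) ^ j)) has_field_derivative
      integral (cbox 0 1) (\<lambda>y. - real j * (f y / (x + y) ^ Suc j))) (at x within {0<..})"
  proof (rule leibniz_rule_field_derivative)
    fix u y :: real
    assume "u \<in> {0<..}" "y \<in> cbox 0 1"
    then have "u + y \<noteq> 0"
      by auto
    have "- (f y * (real j * v ^ (j - 1))) / (v ^ j * v ^ j) = - real j * (f y / v ^ Suc j)"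
      if "v \<noteq> 0" for v :: real
      using that by (cases j) (simp_all add: field_simps)
    then show "((\<lambda>u. f y / (u + y) ^ j) has_field_derivative - real j * (f y / (u + y) ^ Suc j))
        (at u within {0<..})"
      using \<open>u + y \<noteq> 0\<close> by (auto intro!: derivative_eq_intros)
  next
    fix u :: real
    assume "u \<in> {0<..}"
    then show "(\<lambda>y. f y / (u + y) ^ j) integrable_on cbox 0 1"
      unfolding cbox_interval
      by (intro integrable_continuous_interval continuous_on_stieltjes_integrand f) auto
  next
    show "continuous_on ({0<..} \<times> cbox 0 1) (\<lambda>(u, y). - real j * (f y / (u + y) ^ Suc j))"
      unfolding cbox_interval case_prod_unfold
      by (intro continuous_intros continuous_on_compose2[OF f]) (auto simp: add_pos_nonneg)
  qed (use x in auto)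
  moreover have "at x within {0<..} = at x"
    using x by (intro at_within_open) auto
  moreover have "integral {0..1} (\<lambda>y. - real j * (f y / (x + y) ^ Suc j))
      = - real j * stieltjes (Suc j) f x"
    unfolding stieltjes_def
    by (rule integral_mult[symmetric])
      (intro integrable_continuous_interval continuous_on_stieltjes_integrand f x)
  ultimately show ?thesis
    unfolding stieltjes_def cbox_interval by simp
qed

lemma continuous_on_stieltjes:
  fixes f :: "real \<Rightarrow> real"
  assumes f: "continuous_on {0..1} f"
  shows "continuous_on {0<..} (stieltjes j f)"
  by (intro continuous_at_imp_continuous_on ballI DERIV_isCont[OF has_real_derivative_stieltjes[OF f]])
    simp

lemma stieltjes_diff_shift:
  fixes f :: "real \<Rightarrow> real"
  assumes f: "continuous_on {0..1} f" and x: "0 < x"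
  shows "stieltjes j f x - (x + z) * stieltjes (Suc j) f x = stieltjes (Suc j) (\<lambda>y. (y - z) * f y) x"
proof -
  have int: "(\<lambda>y. f y / (x + y) ^ k) integrable_on {0..1}" for k
    by (intro integrable_continuous_interval continuous_on_stieltjes_integrand f x)
  have "integral {0..1} (\<lambda>y. f y / (x + y) ^ j - (x + z) * (f y / (x + y) ^ Suc j))
      = stieltjes j f x - integral {0..1} (\<lambda>y. (x + z) * (f y / (x + y) ^ Suc j))"
    unfolding stieltjes_def by (intro integral_diff int integrable_on_mult_right[OF int])
  then have "stieltjes j f x - (x + z) * stieltjes (Suc j) f x
      = integral {0..1} (\<lambda>y. f y / (x + y) ^ j - (x + z) * (f y / (x + y) ^ Suc j))"
    unfolding stieltjes_def by (simp only: integral_mult[OF int])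
  also have "\<dots> = stieltjes (Suc j) (\<lambda>y. (y - z) * f y) x"
  proof -
    have "a / v ^ j - c * (a / v ^ Suc j) = (v - c) * a / v ^ Suc j" if "v \<noteq> 0" for a c v :: real
      using that by (simp add: field_simps)
    from this[of "x + _"] show ?thesis
      unfolding stieltjes_def by (intro integral_cong) (use x in auto)
  qed
  finally show ?thesis .
qed

text \<open>The derivative of \<open>(x + z) ^ j / (x + y) ^ j\<close> in \<open>x\<close> carries the factor \<open>y - z\<close>:
  differentiating trades one sign change of the density for at most one zero of the transform.\<close>

lemma has_real_derivative_weighted_stieltjes:
  fixes f :: "real \<Rightarrow> real"
  assumes f: "continuous_on {0..1} f" and x: "0 < x" and j: "1 \<le> j"
  shows "((\<lambda>x. (x + z) ^ j * stieltjes j f x) has_real_derivative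
      real j * (x + z) ^ (j - 1) * stieltjes (Suc j) (\<lambda>y. (y - z) * f y) x) (at x)"
proof -
  have deriv: "((\<lambda>x. (x + z) ^ j * stieltjes j f x) has_real_derivative
      real j * (x + z) ^ (j - 1) * stieltjes j f x + (x + z) ^ j * - (real j * stieltjes (Suc j) f x)) (at x)"
    by (auto intro!: derivative_eq_intros has_real_derivative_stieltjes[OF f x])
  have pow: "(x + z) ^ j = (x + z) ^ (j - 1) * (x + z)"
    using j by (simp add: power_eq_if)
  show ?thesis
    by (rule DERIV_cong[OF deriv])
      (unfold stieltjes_diff_shift[OF f x, symmetric] pow, simp add: algebra_simps)
qed

section \<open>Sign changes and zeros\<close>

definition one_signed_on :: "'a set \<Rightarrow> ('a \<Rightarrow> real) \<Rightarrow> bool" where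
  "one_signed_on I f \<longleftrightarrow> (\<exists>\<sigma>\<in>{-1, 1}. \<forall>x\<in>I. 0 \<le> \<sigma> * f x)"

lemma connected_nonzero_imp_strict_sign:
  fixes h :: "real \<Rightarrow> real"
  assumes I: "connected I" and h: "continuous_on I h" and nz: "\<And>x. x \<in> I \<Longrightarrow> h x \<noteq> 0"
  shows "\<exists>\<sigma>\<in>{-1, 1}. \<forall>x\<in>I. 0 < \<sigma> * h x"
proof (rule ccontr)
  assume "\<not> ?thesis"
  then obtain u v where "u \<in> I" "\<not> 0 < h u" "v \<in> I" "\<not> 0 < - h v"
    by auto
  then have "u \<in> I" "v \<in> I" "h u < 0" "0 < h v"
    using nz[of u] nz[of v] by auto
  then have "0 \<in> h ` I"
    using connectedD_interval[OF connected_continuous_image[OF h I]] by fastforce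
  then show False
    using nz by auto
qed

lemma one_signed_on_glue:
  fixes G :: "real \<Rightarrow> real"
  assumes left: "\<And>x. x \<in> {a<..<m} \<Longrightarrow> 0 \<le> \<sigma> * G x"
    and right: "\<And>x. x \<in> {m<..<c} \<Longrightarrow> 0 < \<tau> * G x"
    and zero: "G m = 0" and signs: "\<sigma> \<in> {-1, 1}" "\<tau> \<in> {-1, 1}"
  shows "one_signed_on {a<..<c} G \<or> one_signed_on {a<..<c} (\<lambda>x. (x - m) * G x)"
proof -
  consider "\<tau> = \<sigma>" | "\<tau> = - \<sigma>"
    using signs by auto
  then show ?thesis
  proof cases
    case 1
    have "0 \<le> \<sigma> * G x" if "x \<in> {a<..<c}" for x
      using left[of x] right[of x] zero 1 that by (cases x m rule: linorder_cases) auto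
    then show ?thesis
      using signs unfolding one_signed_on_def by blast
  next
    case 2
    have "0 \<le> - \<sigma> * ((x - m) * G x)" if "x \<in> {a<..<c}" for x
    proof (cases x m rule: linorder_cases)
      case less
      then have "0 \<le> (m - x) * (\<sigma> * G x)"
        using left[of x] that by simp
      then show ?thesis
        by (simp add: algebra_simps)
    next
      case greater
      then have "0 \<le> (x - m) * (\<tau> * G x)"
        using right[of x] that by simp
      then show ?thesis
        using 2 by (simp add: algebra_simps)
    qed simp
    moreover have "- \<sigma> \<in> {-1, 1}"
      using signs by auto
    ultimately show ?thesis
      unfolding one_signed_on_def by blast
  qed
qed

lemma one_signed_on_extend_past_zero:
  fixes h :: "real \<Rightarrow> real"
  assumes h: "continuous_on {m<..<c} h" and nz: "\<And>x. x \<in> {m<..<c} \<Longrightarrow> h x \<noteq> 0"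
    and zero: "h m = 0" and Z: "finite Z" "\<And>w. w \<in> Z \<Longrightarrow> w < m"
    and left: "one_signed_on {a<..<m} (\<lambda>x. h x * (\<Prod>w\<in>Z. x - w))"
  shows "one_signed_on {a<..<c} (\<lambda>x. h x * (\<Prod>w\<in>Z. x - w))
    \<or> one_signed_on {a<..<c} (\<lambda>x. h x * (\<Prod>w\<in>insert m Z. x - w))"
proof -
  define G where "G x = h x * (\<Prod>w\<in>Z. x - w)" for x
  obtain \<sigma> where \<sigma>: "\<sigma> \<in> {-1, 1}" "\<And>x. x \<in> {a<..<m} \<Longrightarrow> 0 \<le> \<sigma> * G x"
    using left unfolding one_signed_on_def G_def by blast
  have "continuous_on {m<..<c} G"
    unfolding G_def by (intro continuous_intros h)
  moreover have "G x \<noteq> 0" if "x \<in> {m<..<c}" for x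
    using nz[OF that] Z that by (force simp: G_def prod_zero_iff)
  ultimately obtain \<tau> where "\<tau> \<in> {-1, 1}" "\<forall>x\<in>{m<..<c}. 0 < \<tau> * G x"
    using connected_nonzero_imp_strict_sign[OF connected_Ioo] by blast
  then have "one_signed_on {a<..<c} G \<or> one_signed_on {a<..<c} (\<lambda>x. (x - m) * G x)"
    using one_signed_on_glue[of a m \<sigma> G c \<tau>] \<sigma> zero by (simp add: G_def)
  moreover have "(\<lambda>x. (x - m) * G x) = (\<lambda>x. h x * (\<Prod>w\<in>insert m Z. x - w))"
  proof -
    have "m \<notin> Z"
      using Z(2) by blast
    then show ?thesis
      using Z(1) unfolding G_def by (simp add: mult_ac)
  qed
  ultimately show ?thesis
    unfolding G_def by simp
qed

lemma exists_one_signed_on_times_zeros: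
  fixes h :: "real \<Rightarrow> real"
  assumes h: "continuous_on {a<..<b} h" and fin: "finite {x\<in>{a<..<b}. h x = 0}"
  shows "\<exists>Z\<subseteq>{x\<in>{a<..<b}. h x = 0}. one_signed_on {a<..<b} (\<lambda>x. h x * (\<Prod>w\<in>Z. x - w))"
proof -
  have "\<And>c. c \<le> b \<Longrightarrow> {x\<in>{a<..<c}. h x = 0} = F \<Longrightarrow>
      \<exists>Z\<subseteq>F. one_signed_on {a<..<c} (\<lambda>x. h x * (\<Prod>w\<in>Z. x - w))" if "finite F" for F
    using that
  proof (induction F rule: finite_linorder_max_induct)
    case (empty c)
    have "continuous_on {a<..<c} h"
      using h by (rule continuous_on_subset) (use empty in auto)
    moreover have "h x \<noteq> 0" if "x \<in> {a<..<c}" for x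
      using empty.prems(2) that by auto
    ultimately obtain \<sigma> where "\<sigma> \<in> {-1, 1}" "\<forall>x\<in>{a<..<c}. 0 < \<sigma> * h x"
      using connected_nonzero_imp_strict_sign[OF connected_Ioo] by blast
    then have "one_signed_on {a<..<c} (\<lambda>x. h x * (\<Prod>w\<in>{}. x - w))"
      unfolding one_signed_on_def by (auto intro: less_imp_le)
    then show ?case
      by blast
  next
    case (insert m A c)
    have m: "a < m" "m < c" "h m = 0"
      using insert.prems(2) by auto
    then have "m \<le> b"
      using insert.prems(1) by simp
    have "{x\<in>{a<..<m}. h x = 0} = A"
      using insert.hyps(2) insert.prems(2) m by auto
    then obtain Z where Z: "Z \<subseteq> A" "one_signed_on {a<..<m} (\<lambda>x. h x * (\<Prod>w\<in>Z. x - w))"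
      using insert.IH \<open>m \<le> b\<close> by blast
    have "continuous_on {m<..<c} h"
      using h by (rule continuous_on_subset) (use m insert.prems(1) in auto)
    moreover have "h x \<noteq> 0" if "x \<in> {m<..<c}" for x
    proof
      assume "h x = 0"
      then have "x \<in> insert m A"
        using that m(1) by (simp add: insert.prems(2)[symmetric])
      then show False
        using insert.hyps(2) that by auto
    qed
    moreover have "finite Z" "\<And>w. w \<in> Z \<Longrightarrow> w < m"
      using Z(1) insert.hyps finite_subset by auto
    ultimately have "one_signed_on {a<..<c} (\<lambda>x. h x * (\<Prod>w\<in>Z. x - w))
        \<or> one_signed_on {a<..<c} (\<lambda>x. h x * (\<Prod>w\<in>insert m Z. x - w))"
      using one_signed_on_extend_past_zero m(3) Z(2) by blast
    moreover have "Z \<subseteq> insert m A" "insert m Z \<subseteq> insert m A"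
      using Z(1) by auto
    ultimately show ?case
      by blast
  qed
  then show ?thesis
    using fin by blast
qed

lemma Rolle_between_zeros:
  fixes f f' :: "real \<Rightarrow> real"
  assumes I: "is_interval I" and deriv: "\<And>x. x \<in> I \<Longrightarrow> (f has_real_derivative f' x) (at x)"
    and ab: "a \<in> I" "b \<in> I" "a < b" "f a = 0" "f b = 0"
  obtains c where "a < c" "c < b" "c \<in> I" "f' c = 0"
proof -
  have sub: "{a..b} \<subseteq> I"
    using mem_is_interval_1_I[OF I ab(1,2)] by auto
  have "isCont f x" if "x \<in> {a..b}" for x
    using sub that by (intro DERIV_isCont[OF deriv]) auto
  then have "continuous_on {a..b} f"
    by (rule continuous_at_imp_continuous_on[OF ballI])
  moreover have "(f has_derivative (\<lambda>v. f' x * v)) (at x)" if "a < x" "x < b" for x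
  proof -
    have "x \<in> I"
      using sub that by auto
    then show ?thesis
      using deriv[of x] unfolding has_field_derivative_def by simp
  qed
  ultimately obtain c where c: "a < c" "c < b" "(\<lambda>v. f' c * v) = (\<lambda>v. 0)"
    using Rolle_deriv[of a b f "\<lambda>x v. f' x * v"] ab(3-5) by auto
  moreover have "c \<in> I"
    using sub c(1,2) by auto
  moreover have "f' c = 0"
    using fun_cong[OF c(3), of 1] by simp
  ultimately show ?thesis
    using that by blast
qed

lemma card_zeros_le_Suc_card_deriv_zeros:
  fixes f f' :: "real \<Rightarrow> real"
  assumes I: "is_interval I" and deriv: "\<And>x. x \<in> I \<Longrightarrow> (f has_real_derivative f' x) (at x)"
    and S: "finite S" "S \<subseteq> {x\<in>I. f x = 0}"
  shows "\<exists>T\<subseteq>{x\<in>I. f' x = 0}. finite T \<and> card S \<le> Suc (card T)"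
proof -
  have "\<exists>T\<subseteq>{x\<in>I. f' x = 0}. finite T \<and> card S \<le> Suc (card T) \<and> (\<forall>t\<in>T. \<exists>s\<in>S. t < s)"
    using S
  proof (induction S rule: finite_linorder_max_induct)
    case empty
    then show ?case
      by auto
  next
    case (insert b A)
    obtain T where T: "T \<subseteq> {x\<in>I. f' x = 0}" "finite T" "card A \<le> Suc (card T)"
      and T_below: "\<forall>t\<in>T. \<exists>s\<in>A. t < s"
      using insert.IH insert.prems by auto
    show ?case
    proof (cases "A = {}")
      case True
      then show ?thesis
        by auto
    next
      case False
      define a where "a = Max A"
      have a: "a \<in> A" "a < b"
        using False insert.hyps unfolding a_def by auto
      then obtain c where c: "a < c" "c < b" "c \<in> I" "f' c = 0"
        using Rolle_between_zeros[OF I deriv] insert.prems by blast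
      have "c \<notin> T"
      proof
        assume "c \<in> T"
        then obtain s where "s \<in> A" "c < s"
          using T_below by blast
        moreover have "s \<le> a"
          unfolding a_def using \<open>s \<in> A\<close> insert.hyps(1) by simp
        ultimately show False
          using c(1) by simp
      qed
      moreover have "b \<notin> A"
        using insert.hyps(2) by blast
      moreover have "\<forall>t\<in>insert c T. \<exists>s\<in>insert b A. t < s"
        using T_below c(2) by blast
      ultimately show ?thesis
        using T c insert.hyps(1) by (intro exI[of _ "insert c T"]) simp
    qed
  qed
  then show ?thesis
    by blast
qed

section \<open>Zeros of Stieltjes transforms\<close>

lemma stieltjes_nonzero:
  fixes f :: "real \<Rightarrow> real"
  assumes f: "continuous_on {0..1} f" and sign: "one_signed_on {0<..<1} f"
    and y: "y \<in> {0<..<1}" "f y \<noteq> 0" and x: "0 < x"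
  shows "stieltjes j f x \<noteq> 0"
proof
  assume zero: "stieltjes j f x = 0"
  obtain \<sigma> where \<sigma>: "\<sigma> \<in> {-1, 1}" "\<And>y. y \<in> {0<..<1} \<Longrightarrow> 0 \<le> \<sigma> * f y"
    using sign unfolding one_signed_on_def by blast
  define h where "h y = \<sigma> * (f y / (x + y) ^ j)" for y
  have cont: "continuous_on {0..1} (\<lambda>y. f y / (x + y) ^ j)"
    by (rule continuous_on_stieltjes_integrand[OF f x])
  then have "((\<lambda>y. f y / (x + y) ^ j) has_integral 0) (cbox 0 1)"
    using zero integrable_continuous_interval unfolding stieltjes_def cbox_interval
    by (metis has_integral_integral)
  then have "(h has_integral \<sigma> * 0) (cbox 0 1)"
    unfolding h_def by (rule has_integral_mult_right)
  then have integral_h: "(h has_integral 0) (cbox 0 1)"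
    by simp
  have "h y = 0"
  proof (rule has_integral_0_cbox_imp_0[OF _ _ integral_h])
    show "continuous_on (cbox 0 1) h"
      unfolding h_def cbox_interval by (intro continuous_intros cont)
    show "0 \<le> h u" if "u \<in> box 0 1" for u
      using \<sigma>(2)[of u] that x unfolding h_def box_real by (auto intro: divide_nonneg_pos)
  qed (use y in auto)
  moreover have "h y \<noteq> 0"
    using \<sigma>(1) y x unfolding h_def by auto
  ultimately show False
    by simp
qed

lemma card_stieltjes_zeros_le_card_sign_changes:
  fixes f :: "real \<Rightarrow> real"
  assumes "finite Z" "continuous_on {0..1} f" "finite {y\<in>{0<..<1}. f y = 0}" "Z \<subseteq> {0<..<1}"
    "one_signed_on {0<..<1} (\<lambda>y. f y * (\<Prod>z\<in>Z. y - z))" "1 \<le> j"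
    "finite S" "S \<subseteq> {x\<in>{0<..}. stieltjes j f x = 0}"
  shows "card S \<le> card Z"
  using assms
proof (induction Z arbitrary: f j S rule: finite_induct)
  case empty
  have "infinite {0<..<1::real}"
    by simp
  then have "\<not> {0<..<1} \<subseteq> {y\<in>{0<..<1}. f y = 0}"
    using empty.prems(2) finite_subset by blast
  then obtain y where "y \<in> {0<..<1}" "f y \<noteq> 0"
    by blast
  moreover have "one_signed_on {0<..<1} f"
    using empty.prems(4) by simp
  ultimately have "S = {}"
    using stieltjes_nonzero[OF empty.prems(1)] empty.prems(7) by blast
  then show ?case
    by simp
next
  case (insert z Z f j S)
  define f' where "f' y = (y - z) * f y" for y
  have z: "0 < z"
    using insert.prems(3) by auto
  have "continuous_on {0..1} f'"
    unfolding f'_def by (intro continuous_intros insert.prems(1))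
  moreover have "finite {y\<in>{0<..<1}. f' y = 0}"
    by (rule finite_subset[OF _ finite_insert[THEN iffD2, OF insert.prems(2)], of _ z])
      (auto simp: f'_def)
  moreover have "one_signed_on {0<..<1} (\<lambda>y. f' y * (\<Prod>z\<in>Z. y - z))"
    using insert.prems(4) insert.hyps unfolding f'_def by (simp add: mult_ac)
  moreover have deriv: "((\<lambda>x. (x + z) ^ j * stieltjes j f x) has_real_derivative
      real j * (x + z) ^ (j - 1) * stieltjes (Suc j) f' x) (at x)" if "x \<in> {0<..}" for x
    unfolding f'_def using has_real_derivative_weighted_stieltjes[OF insert.prems(1)] insert.prems(5) that
    by simp
  have "S \<subseteq> {x\<in>{0<..}. (x + z) ^ j * stieltjes j f x = 0}"
    using insert.prems(7) by auto
  then obtain T where T: "T \<subseteq> {x\<in>{0<..}. real j * (x + z) ^ (j - 1) * stieltjes (Suc j) f' x = 0}"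
      "finite T" "card S \<le> Suc (card T)"
    using card_zeros_le_Suc_card_deriv_zeros[OF is_interval_oi deriv insert.prems(6)] by blast
  have "T \<subseteq> {x\<in>{0<..}. stieltjes (Suc j) f' x = 0}"
    using T(1) insert.prems(5) z by (auto simp: add_pos_pos)
  ultimately have "card T \<le> card Z"
    using insert.IH[of f' "Suc j" T] insert.prems(3) T(2) by auto
  then show ?case
    using T(3) insert.hyps by simp
qed

lemma card_stieltjes_zeros_le_card_zeros:
  fixes f :: "real \<Rightarrow> real"
  assumes f: "continuous_on {0..1} f" and fin: "finite {y\<in>{0<..<1}. f y = 0}" and j: "1 \<le> j"
  shows "finite {x\<in>{0<..}. stieltjes j f x = 0}"
    and "card {x\<in>{0<..}. stieltjes j f x = 0} \<le> card {y\<in>{0<..<1}. f y = 0}"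
proof -
  have "continuous_on {0<..<1} f"
    using f by (rule continuous_on_subset) auto
  then obtain Z where Z: "Z \<subseteq> {y\<in>{0<..<1}. f y = 0}"
    and sign: "one_signed_on {0<..<1} (\<lambda>y. f y * (\<Prod>z\<in>Z. y - z))"
    using exists_one_signed_on_times_zeros[OF _ fin] by blast
  have "finite Z"
    using Z fin by (rule finite_subset)
  have "Z \<subseteq> {0<..<1}"
    using Z by auto
  then have "card S \<le> card Z" if "S \<subseteq> {x\<in>{0<..}. stieltjes j f x = 0}" "finite S" for S
    using card_stieltjes_zeros_le_card_sign_changes[OF \<open>finite Z\<close> f fin _ sign j \<open>finite S\<close> that(1)]
    by blast
  then have "finite {x\<in>{0<..}. stieltjes j f x = 0} \<and> card {x\<in>{0<..}. stieltjes j f x = 0} \<le> card Z"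
    by (rule finite_if_finite_subsets_card_bdd)
  then show "finite {x\<in>{0<..}. stieltjes j f x = 0}"
    and "card {x\<in>{0<..}. stieltjes j f x = 0} \<le> card {y\<in>{0<..<1}. f y = 0}"
    using card_mono[OF fin Z] by auto
qed

section \<open>Nonsingularity of the moment matrices\<close>

lemma set_lebesgue_integral_Ioo_nonzero:
  fixes k :: "real \<Rightarrow> real"
  assumes int: "set_integrable lborel {a<..<b} k" and ab: "a < b"
    and nonneg: "\<And>x. x \<in> {a<..<b} \<Longrightarrow> 0 \<le> k x"
    and F: "finite F" and nz: "\<And>x. x \<in> {a<..<b} \<Longrightarrow> x \<notin> F \<Longrightarrow> k x \<noteq> 0"
  shows "(LINT x:{a<..<b}|lborel. k x) \<noteq> 0"
proof
  assume "(LINT x:{a<..<b}|lborel. k x) = 0"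
  moreover have "integrable lborel (\<lambda>x. indicator {a<..<b} x * k x)"
    using int unfolding set_integrable_def by simp
  moreover have "AE x in lborel. 0 \<le> indicator {a<..<b} x * k x"
    using nonneg by (intro AE_I2) (simp add: indicator_def)
  ultimately have "AE x in lborel. indicator {a<..<b} x * k x = 0"
    unfolding set_lebesgue_integral_def by (simp add: integral_nonneg_eq_0_iff_AE)
  moreover have "AE x in lborel. x \<notin> F"
    using F by (intro AE_not_in finite_imp_null_set_lborel)
  ultimately have "AE x in lborel. x \<notin> {a<..<b}"
    by eventually_elim (use nz in auto)
  then have "{a<..<b} \<in> null_sets lborel"
    by (subst AE_iff_null_sets) auto
  then show False
    using ab by (simp add: null_sets_def)
qed

lemma set_integral_poly_mult_eq_0:
  fixes F :: "real \<Rightarrow> real" and q :: "real poly"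
  assumes int: "\<And>i. i \<le> degree q \<Longrightarrow> set_integrable lborel A (\<lambda>x. x ^ i * F x)"
    and orth: "\<And>i. i \<le> degree q \<Longrightarrow> (LINT x:A|lborel. x ^ i * F x) = 0"
  shows "set_integrable lborel A (\<lambda>x. poly q x * F x)"
    and "(LINT x:A|lborel. poly q x * F x) = 0"
proof -
  have sum: "indicator A x * (poly q x * F x)
      = (\<Sum>i\<le>degree q. coeff q i * (indicator A x * (x ^ i * F x)))" for x
    unfolding poly_altdef by (simp add: sum_distrib_left sum_distrib_right mult_ac)
  have int_i: "integrable lborel (\<lambda>x. indicator A x * (x ^ i * F x))" if "i \<le> degree q" for i
    using int[OF that] unfolding set_integrable_def by simp
  show "set_integrable lborel A (\<lambda>x. poly q x * F x)"
    unfolding set_integrable_def real_scaleR_def sum using int_i by auto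
  show "(LINT x:A|lborel. poly q x * F x) = 0"
    unfolding set_lebesgue_integral_def real_scaleR_def sum using int_i orth
    by (subst Bochner_Integration.integral_sum) (auto simp: set_lebesgue_integral_def)
qed

lemma orthogonal_monomials_imp_card_zeros_ge:
  fixes h \<omega> :: "real \<Rightarrow> real"
  assumes h: "continuous_on {0<..<1} h" and fin: "finite {x\<in>{0<..<1}. h x = 0}"
    and \<omega>: "\<And>x. x \<in> {0<..<1} \<Longrightarrow> 0 < \<omega> x"
    and int: "\<And>i. i < N \<Longrightarrow> set_integrable lborel {0<..<1} (\<lambda>x. x ^ i * \<omega> x * h x)"
    and orth: "\<And>i. i < N \<Longrightarrow> (LINT x:{0<..<1}|lborel. x ^ i * \<omega> x * h x) = 0"
  shows "N \<le> card {x\<in>{0<..<1}. h x = 0}"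
proof (rule ccontr)
  assume few: "\<not> ?thesis"
  obtain Z where Z: "Z \<subseteq> {x\<in>{0<..<1}. h x = 0}"
    and sign: "one_signed_on {0<..<1} (\<lambda>x. h x * (\<Prod>w\<in>Z. x - w))"
    using exists_one_signed_on_times_zeros[OF h fin] by blast
  obtain \<sigma> where \<sigma>: "\<sigma> \<in> {-1, 1}"
    "\<And>x. x \<in> {0<..<1} \<Longrightarrow> 0 \<le> \<sigma> * (h x * (\<Prod>w\<in>Z. x - w))"
    using sign unfolding one_signed_on_def by blast
  have "finite Z"
    using Z fin by (rule finite_subset)
  define q :: "real poly" where "q = (\<Prod>w\<in>Z. [:- w, 1:])"
  have poly_q: "poly q x = (\<Prod>w\<in>Z. x - w)" for x
    by (simp add: q_def poly_prod)
  have "degree q \<le> card Z"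
    using degree_prod_sum_le[OF \<open>finite Z\<close>, of "\<lambda>w. [:- w, 1:]"] by (simp add: q_def)
  also have "\<dots> < N"
    using card_mono[OF fin Z] few by linarith
  finally have "degree q < N" .
  then have "set_integrable lborel {0<..<1} (\<lambda>x. poly q x * (\<omega> x * h x))"
    and integral_0: "(LINT x:{0<..<1}|lborel. poly q x * (\<omega> x * h x)) = 0"
    using set_integral_poly_mult_eq_0[of q "{0<..<1}" "\<lambda>x. \<omega> x * h x"] int orth
    by (simp_all add: mult.assoc)
  moreover have "0 \<le> \<sigma> * (poly q x * (\<omega> x * h x))" if "x \<in> {0<..<1}" for x
  proof -
    have "0 \<le> \<omega> x * (\<sigma> * (h x * (\<Prod>w\<in>Z. x - w)))"
      using \<omega>[OF that] \<sigma>(2)[OF that] by simp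
    also have "\<dots> = \<sigma> * (poly q x * (\<omega> x * h x))"
      unfolding poly_q by (simp add: mult_ac)
    finally show ?thesis .
  qed
  moreover have "\<sigma> * (poly q x * (\<omega> x * h x)) \<noteq> 0"
    if "x \<in> {0<..<1}" "x \<notin> {x\<in>{0<..<1}. h x = 0}" for x
  proof -
    have "x \<notin> Z"
      using Z that by blast
    then have "poly q x \<noteq> 0"
      using \<open>finite Z\<close> unfolding poly_q by (simp add: prod_zero_iff)
    then show ?thesis
      using \<sigma>(1) \<omega>[of x] that by auto
  qed
  ultimately have "(LINT x:{0<..<1}|lborel. \<sigma> * (poly q x * (\<omega> x * h x))) \<noteq> 0"
    using fin by (intro set_lebesgue_integral_Ioo_nonzero[where F = "{x\<in>{0<..<1}. h x = 0}"]) auto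
  then show False
    using integral_0 by simp
qed

lemma det_mat_eq_0_iff:
  fixes a :: "nat \<Rightarrow> nat \<Rightarrow> 'a::field"
  shows "Determinant.det (Matrix.mat n n (\<lambda>(i, j). a i j)) = 0
    \<longleftrightarrow> (\<exists>v. (\<exists>j<n. v j \<noteq> 0) \<and> (\<forall>i<n. (\<Sum>j<n. a i j * v j) = 0))"
proof -
  let ?A = "Matrix.mat n n (\<lambda>(i, j). a i j)"
  have mult: "(?A *\<^sub>v vec n v) $ i = (\<Sum>j<n. a i j * v j)" if "i < n" for v i
    using that by (simp add: scalar_prod_def lessThan_atLeast0)
  have "Determinant.det ?A = 0 \<longleftrightarrow> (\<exists>w. w \<in> carrier_vec n \<and> w \<noteq> 0\<^sub>v n \<and> ?A *\<^sub>v w = 0\<^sub>v n)"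
    by (rule det_0_iff_vec_prod_zero_field) simp
  also have "\<dots> \<longleftrightarrow> (\<exists>v. (\<exists>j<n. v j \<noteq> 0) \<and> (\<forall>i<n. (\<Sum>j<n. a i j * v j) = 0))"
  proof
    assume "\<exists>w. w \<in> carrier_vec n \<and> w \<noteq> 0\<^sub>v n \<and> ?A *\<^sub>v w = 0\<^sub>v n"
    then obtain w where w: "w \<in> carrier_vec n" "w \<noteq> 0\<^sub>v n" "?A *\<^sub>v w = 0\<^sub>v n"
      by blast
    have "w = vec n (\<lambda>j. w $ j)"
      using w(1) by auto
    then show "\<exists>v. (\<exists>j<n. v j \<noteq> 0) \<and> (\<forall>i<n. (\<Sum>j<n. a i j * v j) = 0)"
      using w mult[of _ "\<lambda>j. w $ j"] by (intro exI[of _ "\<lambda>j. w $ j"]) (metis eq_vecI carrier_vecD index_zero_vec(1,2))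
  next
    assume "\<exists>v. (\<exists>j<n. v j \<noteq> 0) \<and> (\<forall>i<n. (\<Sum>j<n. a i j * v j) = 0)"
    then obtain v where "\<exists>j<n. v j \<noteq> 0" "\<forall>i<n. (\<Sum>j<n. a i j * v j) = 0"
      by blast
    then show "\<exists>w. w \<in> carrier_vec n \<and> w \<noteq> 0\<^sub>v n \<and> ?A *\<^sub>v w = 0\<^sub>v n"
      using mult by (intro exI[of _ "vec n v"]) (auto simp: vec_eq_iff)
  qed
  finally show ?thesis .
qed

lemma cauchy_moments_kernel_trivial:
  fixes \<omega> :: "real \<Rightarrow> real" and v :: "nat \<Rightarrow> real"
  assumes \<omega>: "continuous_on {0..1} \<omega>" "\<And>x. x \<in> {0<..<1} \<Longrightarrow> 0 < \<omega> x"
    and ker: "\<And>i. i < N \<Longrightarrow>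
      (\<Sum>j<N. cauchy_pairing (\<lambda>x. x ^ i * \<omega> x) (\<lambda>y. y ^ (j + e) * \<omega> y) * v j) = 0"
    and j: "j < N"
  shows "v j = 0"
proof (rule ccontr)
  assume "v j \<noteq> 0"
  define g :: "real poly" where "g = (\<Sum>k<N. monom (v k) k)"
  have poly_g: "poly g y = (\<Sum>k<N. v k * y ^ k)" for y
    by (simp add: g_def poly_sum poly_monom)
  have "coeff g j = v j"
    using j by (simp add: g_def coeff_sum coeff_monom)
  then have "g \<noteq> 0"
    using \<open>v j \<noteq> 0\<close> by auto
  have "degree g \<le> N - 1"
    unfolding g_def by (rule degree_sum_le) (auto intro: order.trans[OF degree_monom_le])
  define f where "f y = y ^ e * poly g y * \<omega> y" for y
  have f_cont: "continuous_on {0..1} f"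
    unfolding f_def by (intro continuous_intros \<omega>(1))
  have f_zeros: "{y\<in>{0<..<1}. f y = 0} \<subseteq> {y. poly g y = 0}"
    using \<omega>(2) by (fastforce simp: f_def)
  then have f_fin: "finite {y\<in>{0<..<1}. f y = 0}"
    using poly_roots_finite[OF \<open>g \<noteq> 0\<close>] by (rule finite_subset)
  have "card {y\<in>{0<..<1}. f y = 0} < N"
    using card_mono[OF poly_roots_finite[OF \<open>g \<noteq> 0\<close>] f_zeros] card_poly_roots_bound[OF \<open>g \<noteq> 0\<close>]
      \<open>degree g \<le> N - 1\<close> j
    by linarith
  moreover have sub: "{x\<in>{0<..<1}. stieltjes 1 f x = 0} \<subseteq> {x\<in>{0<..}. stieltjes 1 f x = 0}"
    by auto
  moreover note card_stieltjes_zeros_le_card_zeros[OF f_cont f_fin order.refl]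
  ultimately have \<Phi>_zeros: "finite {x\<in>{0<..<1}. stieltjes 1 f x = 0}"
    "card {x\<in>{0<..<1}. stieltjes 1 f x = 0} < N"
    using finite_subset[OF sub] card_mono[OF _ sub] by fastforce+
  have \<Phi>_cont: "continuous_on {0<..<1} (stieltjes 1 f)"
    using continuous_on_stieltjes[OF f_cont] by (rule continuous_on_subset) auto
  have f_sum: "f = (\<lambda>y. \<Sum>k<N. v k * (y ^ (k + e) * \<omega> y))"
    by (auto simp: f_def poly_g sum_distrib_left sum_distrib_right power_add mult_ac)
  have "N \<le> card {x\<in>{0<..<1}. stieltjes 1 f x = 0}"
  proof (rule orthogonal_monomials_imp_card_zeros_ge[OF \<Phi>_cont \<Phi>_zeros(1) \<omega>(2)])
    fix i
    have "continuous_on {0..1} (\<lambda>x. x ^ i * \<omega> x)"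
      by (intro continuous_intros \<omega>(1))
    note pairing = cauchy_pairing_eq_integral_stieltjes[OF this f_cont]
    show "set_integrable lborel {0<..<1} (\<lambda>x. x ^ i * \<omega> x * stieltjes 1 f x)"
      using pairing(1) .
    assume "i < N"
    then have "cauchy_pairing (\<lambda>x. x ^ i * \<omega> x) f = 0"
      using ker unfolding f_sum
      by (subst cauchy_pairing_sum_right) (auto intro!: continuous_intros \<omega>(1) simp: mult.commute)
    then show "(LINT x:{0<..<1}|lborel. x ^ i * \<omega> x * stieltjes 1 f x) = 0"
      using pairing(2) by simp
  qed
  then show False
    using \<Phi>_zeros(2) by simp
qed

lemma det_cauchy_moments_nonzero:
  fixes \<omega> :: "real \<Rightarrow> real"
  assumes "continuous_on {0..1} \<omega>" "\<And>x. x \<in> {0<..<1} \<Longrightarrow> 0 < \<omega> x"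
  shows "Determinant.det (Matrix.mat N N
      (\<lambda>(i, j). cauchy_pairing (\<lambda>x. x ^ i * \<omega> x) (\<lambda>y. y ^ (j + e) * \<omega> y))) \<noteq> 0"
  unfolding det_mat_eq_0_iff using cauchy_moments_kernel_trivial[OF assms] by blast

definition cauchy_jacobi_weight :: "nat \<Rightarrow> nat \<Rightarrow> real \<Rightarrow> real" where
  "cauchy_jacobi_weight s t x = x ^ s * ((1 - x) / (1 + x)) ^ t"

lemma continuous_on_cauchy_jacobi_weight: "continuous_on {0..1} (cauchy_jacobi_weight s t)"
  unfolding cauchy_jacobi_weight_def by (intro continuous_intros) auto

lemma cauchy_jacobi_weight_pos: "x \<in> {0<..<1} \<Longrightarrow> 0 < cauchy_jacobi_weight s t x"
  unfolding cauchy_jacobi_weight_def by simp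

lemma mom_eq_cauchy_pairing:
  "mom s t i j = cauchy_pairing (\<lambda>x. x ^ i * cauchy_jacobi_weight s t x) (\<lambda>y. y ^ j * cauchy_jacobi_weight s t y)"
proof -
  have "(\<lambda>p. fst p ^ (s + i) * snd p ^ (s + j) / (fst p + snd p)
        * ((1 - fst p) / (1 + fst p)) ^ t * ((1 - snd p) / (1 + snd p)) ^ t)
      = (\<lambda>(x, y). x ^ i * cauchy_jacobi_weight s t x * (y ^ j * cauchy_jacobi_weight s t y) / (x + y))"
    by (auto simp: cauchy_jacobi_weight_def power_add mult_ac)
  then show ?thesis
    unfolding mom_def cauchy_pairing_def lborel_prod by simp
qed

lemma mom_Suc: "mom (s + 1) t i j = mom s t (i + 1) (j + 1)"
  unfolding mom_def by simp

lemma mom_commute: "mom s t i j = mom s t j i"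
  unfolding mom_eq_cauchy_pairing
  by (intro cauchy_pairing_commute continuous_intros continuous_on_cauchy_jacobi_weight)

lemma tau_nonzero: "tau s t n \<noteq> 0"
  using det_cauchy_moments_nonzero[where \<omega> = "cauchy_jacobi_weight s t" and N = n and e = 0,
      OF continuous_on_cauchy_jacobi_weight cauchy_jacobi_weight_pos]
  unfolding tau_def mom_eq_cauchy_pairing by simp

lemma xi_nonzero: "xi s t n \<noteq> 0"
  using det_cauchy_moments_nonzero[where \<omega> = "cauchy_jacobi_weight s t" and N = n and e = 1,
      OF continuous_on_cauchy_jacobi_weight cauchy_jacobi_weight_pos]
  unfolding xi_def mom_eq_cauchy_pairing by simp

section \<open>Bordered determinants\<close>

definition bordered_mat :: "(nat \<Rightarrow> nat \<Rightarrow> 'a) \<Rightarrow> nat \<Rightarrow> (nat \<Rightarrow> 'a) \<Rightarrow> 'a mat" where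
  "bordered_mat a n b = Matrix.mat (n + 1) (n + 1) (\<lambda>(i, j). if j < n then a i j else b i)"

text \<open>Cofactors along the border column do not depend on that column, so they are taken with the
  zero border.\<close>

definition border_cofactor :: "(nat \<Rightarrow> nat \<Rightarrow> 'a::comm_ring_1) \<Rightarrow> nat \<Rightarrow> nat \<Rightarrow> 'a" where
  "border_cofactor a n i = cofactor (bordered_mat a n (\<lambda>_. 0)) i n"

lemma det_bordered_mat:
  "Determinant.det (bordered_mat a n b) = (\<Sum>i<n + 1. b i * border_cofactor a n i)"
proof -
  have "Determinant.det (bordered_mat a n b)
      = (\<Sum>i<n + 1. bordered_mat a n b $$ (i, n) * cofactor (bordered_mat a n b) i n)"
    by (rule laplace_expansion_column) (auto simp: bordered_mat_def)
  also have "\<dots> = (\<Sum>i<n + 1. b i * border_cofactor a n i)"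
  proof (intro sum.cong refl)
    fix i
    assume "i \<in> {..<n + 1}"
    moreover have "mat_delete (bordered_mat a n b) i n = mat_delete (bordered_mat a n (\<lambda>_. 0)) i n"
      unfolding mat_delete_def bordered_mat_def by (intro eq_matI) auto
    ultimately show "bordered_mat a n b $$ (i, n) * cofactor (bordered_mat a n b) i n
        = b i * border_cofactor a n i"
      by (simp add: bordered_mat_def border_cofactor_def cofactor_def)
  qed
  finally show ?thesis .
qed

lemma border_cofactor_last:
  "border_cofactor a n n = Determinant.det (Matrix.mat n n (\<lambda>(i, j). a i j))"
proof -
  have "mat_delete (bordered_mat a n (\<lambda>_. 0)) n n = Matrix.mat n n (\<lambda>(i, j). a i j)"
    unfolding mat_delete_def bordered_mat_def by (intro eq_matI) auto
  then show ?thesis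
    unfolding border_cofactor_def cofactor_def by simp
qed

lemma border_cofactor_0:
  "border_cofactor a n 0 = (-1) ^ n * Determinant.det (Matrix.mat n n (\<lambda>(i, j). a (i + 1) j))"
proof -
  have "mat_delete (bordered_mat a n (\<lambda>_. 0)) 0 n = Matrix.mat n n (\<lambda>(i, j). a (i + 1) j)"
    unfolding mat_delete_def bordered_mat_def by (intro eq_matI) auto
  then show ?thesis
    unfolding border_cofactor_def cofactor_def by simp
qed

lemma border_cofactor_orthogonal:
  assumes "k < n"
  shows "(\<Sum>i<n + 1. a i k * border_cofactor a n i) = 0"
proof -
  have "Determinant.det (bordered_mat a n (\<lambda>i. a i k)) = 0"
    by (rule det_identical_columns[of _ "n + 1" k n])
      (use assms in \<open>auto simp: bordered_mat_def\<close>)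
  then show ?thesis
    by (simp add: det_bordered_mat)
qed

lemma det_mat_transpose:
  "Determinant.det (Matrix.mat n n (\<lambda>(i, j). a j i)) = Determinant.det (Matrix.mat n n (\<lambda>(i, j). a i j))"
proof -
  have "Matrix.mat n n (\<lambda>(i, j). a j i) = transpose_mat (Matrix.mat n n (\<lambda>(i, j). a i j))"
    by (intro eq_matI) auto
  then show ?thesis
    using det_transpose[of "Matrix.mat n n (\<lambda>(i, j). a i j)" n] by simp
qed

lemma left_kernel_eq_smult_border_cofactor:
  fixes c :: "nat \<Rightarrow> nat \<Rightarrow> 'a::field"
  assumes det: "Determinant.det (Matrix.mat n n (\<lambda>(i, j). c i j)) \<noteq> 0"
    and orth: "\<And>k. k < n \<Longrightarrow> (\<Sum>i<n + 1. c i k * u i) = 0" and i: "i \<le> n"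
  shows "Determinant.det (Matrix.mat n n (\<lambda>(i, j). c i j)) * u i = u n * border_cofactor c n i"
proof -
  define D where "D = Determinant.det (Matrix.mat n n (\<lambda>(i, j). c i j))"
  define w where "w i = D * u i - u n * border_cofactor c n i" for i
  have "w n = 0"
    unfolding w_def D_def border_cofactor_last by simp
  have "(\<Sum>i<n. c i k * w i) = 0" if "k < n" for k
  proof -
    have "(\<Sum>i<n. c i k * w i) = (\<Sum>i<n + 1. c i k * w i)"
      using \<open>w n = 0\<close> by simp
    also have "\<dots> = D * (\<Sum>i<n + 1. c i k * u i) - u n * (\<Sum>i<n + 1. c i k * border_cofactor c n i)"
      unfolding w_def by (simp add: algebra_simps sum_subtractf sum_distrib_left)
    also have "\<dots> = 0"
      using orth[OF that] border_cofactor_orthogonal[OF that, of c] by simp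
    finally show ?thesis .
  qed
  moreover have "Determinant.det (Matrix.mat n n (\<lambda>(k, i). c i k)) \<noteq> 0"
    using det_mat_transpose[of n c] det by simp
  ultimately have "w i = 0" if "i < n" for i
    using that unfolding det_mat_eq_0_iff by (auto simp: mult.commute)
  then have "w i = 0"
    using i \<open>w n = 0\<close> by (cases "i = n") auto
  then show ?thesis
    unfolding w_def D_def by simp
qed

lemma sum_shift_diff:
  fixes f b c :: "nat \<Rightarrow> 'a::comm_ring_1"
  shows "(\<Sum>i<n + 1. f i * (A * (if i = 0 then 0 else b (i - 1)) - B * c i))
    = A * (\<Sum>i<n. f (i + 1) * b i) - B * (\<Sum>i<n + 1. f i * c i)"
proof -
  have "f i * (A * (if i = 0 then 0 else b (i - 1)) - B * c i)
      = A * (f i * (if i = 0 then 0 else b (i - 1))) - B * (f i * c i)" for i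
    by (simp add: algebra_simps)
  moreover have "(\<Sum>i<n + 1. f i * (if i = 0 then 0 else b (i - 1))) = (\<Sum>i<n. f (i + 1) * b i)"
    unfolding Suc_eq_plus1[symmetric] sum.lessThan_Suc_shift by simp
  ultimately show ?thesis
    by (simp only: sum_subtractf sum_distrib_left[symmetric])
qed

text \<open>\<open>r\<close> is the coefficient vector of tau_{n+1} x P' - tau' P_{n+1}, where P' and P_{n+1} are the
  unnormalised bordered determinants of the shifted and unshifted moments.  The leading terms cancel
  and \<open>r\<close> satisfies the orthogonality conditions of Q_n, so it is a multiple of the cofactors
  of Q_n; the constant terms fix the factor.\<close>

lemma contiguity_coefficients:
  fixes m :: "nat \<Rightarrow> nat \<Rightarrow> 'a::field" and r :: "nat \<Rightarrow> 'a"
  assumes sym: "\<And>i j. m i j = m j i"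
    and B: "Determinant.det (Matrix.mat n n (\<lambda>(i, j). m (i + 1) (j + 1))) \<noteq> 0"
    and X0: "Determinant.det (Matrix.mat n n (\<lambda>(i, j). m i (j + 1))) \<noteq> 0"
    and r_def: "\<And>i. r i = Determinant.det (Matrix.mat (n + 1) (n + 1) (\<lambda>(i, j). m i j))
        * (if i = 0 then 0 else border_cofactor (\<lambda>i j. m (i + 1) (j + 1)) n (i - 1))
      - Determinant.det (Matrix.mat n n (\<lambda>(i, j). m (i + 1) (j + 1))) * border_cofactor m (n + 1) i"
  shows "r (n + 1) = 0"
    and "i \<le> n \<Longrightarrow> r i = Determinant.det (Matrix.mat (n + 1) (n + 1) (\<lambda>(i, j). m i (j + 1)))
      * border_cofactor (\<lambda>i j. m i (j + 1)) n i"
proof -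
  let ?A = "Determinant.det (Matrix.mat (n + 1) (n + 1) (\<lambda>(i, j). m i j))"
  let ?B = "Determinant.det (Matrix.mat n n (\<lambda>(i, j). m (i + 1) (j + 1)))"
  let ?X0 = "Determinant.det (Matrix.mat n n (\<lambda>(i, j). m i (j + 1)))"
  let ?X1 = "Determinant.det (Matrix.mat (n + 1) (n + 1) (\<lambda>(i, j). m i (j + 1)))"
  define \<alpha> where "\<alpha> = border_cofactor m (n + 1)"
  define \<beta> where "\<beta> = border_cofactor (\<lambda>i j. m (i + 1) (j + 1)) n"
  define \<gamma> where "\<gamma> = border_cofactor (\<lambda>i j. m i (j + 1)) n"
  have r: "r i = ?A * (if i = 0 then 0 else \<beta> (i - 1)) - ?B * \<alpha> i" for i
    unfolding r_def \<alpha>_def \<beta>_def ..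
  show r_last: "r (n + 1) = 0"
    unfolding r \<alpha>_def \<beta>_def by (simp add: border_cofactor_last)
  have r_pairing: "(\<Sum>i<n + 1 + 1. f i * r i)
      = ?A * (\<Sum>i<n + 1. f (i + 1) * \<beta> i) - ?B * (\<Sum>i<n + 1 + 1. f i * \<alpha> i)" for f
    unfolding r by (rule sum_shift_diff)
  have r_orth: "(\<Sum>i<n + 1. m i (k + 1) * r i) = 0" if "k < n" for k
  proof -
    have "(\<Sum>i<n + 1. m i (k + 1) * r i) = (\<Sum>i<n + 1 + 1. m i (k + 1) * r i)"
      using r_last by simp
    also have "\<dots> = 0"
      unfolding r_pairing \<alpha>_def \<beta>_def
      using border_cofactor_orthogonal[of k n "\<lambda>i j. m (i + 1) (j + 1)"]
        border_cofactor_orthogonal[of "k + 1" "n + 1" m] that by simp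
    finally show ?thesis .
  qed
  have r_\<gamma>: "?X0 * r i = r n * \<gamma> i" if "i \<le> n" for i
    using left_kernel_eq_smult_border_cofactor[OF X0 r_orth that] unfolding \<gamma>_def .
  have "Matrix.mat (n + 1) (n + 1) (\<lambda>(i, j). m (i + 1) j)
      = Matrix.mat (n + 1) (n + 1) (\<lambda>(i, j). m j (i + 1))"
    by (intro eq_matI) (auto intro: sym)
  then have "\<alpha> 0 = (-1) ^ (n + 1) * ?X1"
    unfolding \<alpha>_def border_cofactor_0 using det_mat_transpose[of "n + 1" "\<lambda>i j. m i (j + 1)"]
    by simp
  moreover have "\<gamma> 0 = (-1) ^ n * ?B"
    unfolding \<gamma>_def border_cofactor_0 by simp
  ultimately have "(-1) ^ n * ?B * (?X0 * ?X1) = (-1) ^ n * ?B * r n"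
    using r_\<gamma>[of 0] unfolding r by (simp add: algebra_simps)
  then have "r n = ?X0 * ?X1"
    using B by simp
  then show "r i = ?X1 * border_cofactor (\<lambda>i j. m i (j + 1)) n i" if "i \<le> n"
    using r_\<gamma>[OF that] X0 unfolding \<gamma>_def by (simp add: algebra_simps)
qed

lemma det_bordered_contiguity:
  fixes m :: "nat \<Rightarrow> nat \<Rightarrow> 'a::field" and x :: 'a
  assumes sym: "\<And>i j. m i j = m j i"
    and B: "Determinant.det (Matrix.mat n n (\<lambda>(i, j). m (i + 1) (j + 1))) \<noteq> 0"
    and X0: "Determinant.det (Matrix.mat n n (\<lambda>(i, j). m i (j + 1))) \<noteq> 0"
  shows "Determinant.det (Matrix.mat (n + 1) (n + 1) (\<lambda>(i, j). m i j)) * x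
        * Determinant.det (bordered_mat (\<lambda>i j. m (i + 1) (j + 1)) n (\<lambda>i. x ^ i))
      = Determinant.det (Matrix.mat n n (\<lambda>(i, j). m (i + 1) (j + 1)))
          * Determinant.det (bordered_mat m (n + 1) (\<lambda>i. x ^ i))
        + Determinant.det (Matrix.mat (n + 1) (n + 1) (\<lambda>(i, j). m i (j + 1)))
          * Determinant.det (bordered_mat (\<lambda>i j. m i (j + 1)) n (\<lambda>i. x ^ i))"
    (is "?A * x * ?P' = ?B * ?P + ?X1 * ?Q")
proof -
  define \<alpha> where "\<alpha> = border_cofactor m (n + 1)"
  define \<beta> where "\<beta> = border_cofactor (\<lambda>i j. m (i + 1) (j + 1)) n"
  define r where "r i = ?A * (if i = 0 then 0 else \<beta> (i - 1)) - ?B * \<alpha> i" for i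
  note coeffs = contiguity_coefficients[OF sym B X0 r_def[unfolded \<alpha>_def \<beta>_def]]
  have "(\<Sum>i<n + 1 + 1. x ^ i * r i)
      = ?A * (\<Sum>i<n + 1. x ^ (i + 1) * \<beta> i) - ?B * (\<Sum>i<n + 1 + 1. x ^ i * \<alpha> i)"
    unfolding r_def by (rule sum_shift_diff)
  also have "\<dots> = ?A * x * ?P' - ?B * ?P"
    unfolding det_bordered_mat \<alpha>_def \<beta>_def sum_distrib_left by (simp add: mult_ac)
  finally have "?A * x * ?P' - ?B * ?P = (\<Sum>i<n + 1 + 1. x ^ i * r i)"
    by simp
  also have "\<dots> = (\<Sum>i<n + 1. x ^ i * r i)"
    using coeffs(1) by simp
  also have "\<dots> = ?X1 * ?Q"
    unfolding det_bordered_mat sum_distrib_left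
    by (intro sum.cong refl) (simp add: coeffs(2))
  finally show ?thesis
    by (simp add: algebra_simps)
qed

lemma Pcj_eq_det_bordered_mat:
  "Pcj s t n x = Determinant.det (bordered_mat (mom s t) n (\<lambda>i. x ^ i)) / tau s t n"
  unfolding Pcj_def bordered_mat_def ..

lemma Qcj_eq_det_bordered_mat:
  "Qcj s t n x = Determinant.det (bordered_mat (\<lambda>i j. mom s t i (j + 1)) n (\<lambda>i. x ^ i)) / xi s t n"
  unfolding Qcj_def bordered_mat_def ..

theorem proposition2p5:
  fixes s t n :: nat and x :: real
  assumes "x \<noteq> 0"
  shows "Pcj (s + 1) t n x
    = (1 / x) * (Pcj s t (n + 1) x
        + (xi s t n * xi s t (n + 1)) / (tau (s + 1) t n * tau s t (n + 1)) * Qcj s t n x)"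
proof -
  have shifted: "mom (s + 1) t = (\<lambda>i j. mom s t (i + 1) (j + 1))"
    by (intro ext) (rule mom_Suc)
  have "tau s t (n + 1) * x * Determinant.det (bordered_mat (mom (s + 1) t) n (\<lambda>i. x ^ i))
      = tau (s + 1) t n * Determinant.det (bordered_mat (mom s t) (n + 1) (\<lambda>i. x ^ i))
        + xi s t (n + 1) * Determinant.det (bordered_mat (\<lambda>i j. mom s t i (j + 1)) n (\<lambda>i. x ^ i))"
    using det_bordered_contiguity[of "mom s t", OF mom_commute] tau_nonzero[of "s + 1" t n] xi_nonzero[of s t n]
    unfolding tau_def xi_def shifted by blast
  then show ?thesis
    unfolding Pcj_eq_det_bordered_mat Qcj_eq_det_bordered_mat
    using assms tau_nonzero xi_nonzero by (simp add: field_simps)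
qed

end
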